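(* Suppose we have $n\ge3$ agents with additive, identical, normalized valuations, provided with a $2$-value prediction of accuracy $\eta<1-\frac{2(1-a^2)}{4+(2n-3)a}$ for some given $a\in(0,1]$; that is, the allowed error between the prediction and the true valuation is $1-\eta>\frac{2(1-a^2)}{4+(2n-3)a}$. Then there is no online algorithm that guarantees an $a$-EFX allocation for all instances with error at most $1-\eta$, even when $T'=T=2n-1$.
   Context: Online fair division with predictions and identical valuations: agents $[n]$; goods $g_1,\dots,g_T$ arrive one per time step; all agents share a true additive normalized valuation $v$ ($v(g_t)\ge0$, $\sum_{t\in[T]}v(g_t)=1$, $v(S)=\sum_{g\in S}v(g)$), and before any arrival the algorithm receives a prediction $p=(p(g_1),\dots,p(g_{T'}))$ (an additive normalized valuation over $T'$ predicted goods) and the accuracy level. A $2$-value prediction takes at most $2$ distinct values. Error $\frac12\sum_{t=1}^{\max\{T,T'\}}|p(g_t)-v(g_t)|$ (missing entries set to $0$); accuracy $\eta$ means the error is at most $1-\eta$. At time $t$, $v(g_t)$ is revealed and $g_t$ must be irrevocably allocated. For $S\ne\emptyset$, $\bar S=S\setminus\{g\}$ with $g\in\arg\max_{g'\in S}v(S\setminus\{g'\})$, $\bar\emptyset=\emptyset$. An allocation is $a$-EFX if $v(A_i)\ge a\cdot v(\bar A_j)$ for all $i,j$. *)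

theory Defs
  imports Complex_Main
begin

text \<open>Goods g_1..g_T are indexed 0..T-1; a valuation/prediction is a real list.
Agents are indexed 0..n-1.\<close>

definition normalized_valuation :: "real list \<Rightarrow> bool" where
  "normalized_valuation v \<longleftrightarrow> (\<forall>x \<in> set v. 0 \<le> x) \<and> sum_list v = 1"

definition two_value_prediction :: "real list \<Rightarrow> bool" where
  "two_value_prediction p \<longleftrightarrow> normalized_valuation p \<and> card (set p) \<le> 2"

definition entry :: "real list \<Rightarrow> nat \<Rightarrow> real" where
  "entry xs t = (if t < length xs then xs ! t else 0)"

definition pred_error :: "real list \<Rightarrow> real list \<Rightarrow> real" where
  "pred_error p v = (1/2) * (\<Sum>t < max (length v) (length p).
       \<bar>entry p t - entry v t\<bar>)"

definition bundle_val :: "real list \<Rightarrow> nat set \<Rightarrow> real" where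
  "bundle_val v S = (\<Sum>t\<in>S. v ! t)"

text \<open>Value of S-bar: S minus a good g maximizing v(S - {g}); empty set gives 0.\<close>
definition bar_val :: "real list \<Rightarrow> nat set \<Rightarrow> real" where
  "bar_val v S = (if S = {} then 0 else Max ((\<lambda>g. bundle_val v (S - {g})) ` S))"

definition is_aEFX :: "nat \<Rightarrow> real \<Rightarrow> real list \<Rightarrow> (nat \<Rightarrow> nat set) \<Rightarrow> bool" where
  "is_aEFX n a v A \<longleftrightarrow> (\<forall>i<n. \<forall>j<n. bundle_val v (A i) \<ge> a * bar_val v (A j))"

text \<open>A deterministic online algorithm receives the prediction and the values of
the goods revealed so far (including the current one) and outputs the agent
receiving the current good.\<close>
type_synonym online_alg = "real list \<Rightarrow> real list \<Rightarrow> nat"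

definition online_alloc :: "online_alg \<Rightarrow> real list \<Rightarrow> real list \<Rightarrow> nat \<Rightarrow> nat set" where
  "online_alloc alg p v i = {t. t < length v \<and> alg p (take (Suc t) v) = i}"

end

theory Submission
  imports Defs
begin

(* Scale the prediction so that its first 2n-3 goods have value a and its last two goods value 2.
   Two true valuations v and w agree with it except that the last of the first 2n-3 goods is
   lowered by r, and the last two goods become (2+r/2, 2+r/2) in v and (2-tau, 2+r+tau) in w.
   As v and w coincide on the first 2n-3 goods, an online algorithm allocates these goods
   identically in both instances.  If at least two agents receive none of them, then under w one
   of these agents ends up with at most the light good 2-tau, while by pigeonhole some agent holds
   three goods worth at least a-r each; a-EFX fails since 2-tau < 2a(a-r).  Otherwise, under v,
   by pigeonhole an agent other than the owners of the two heavy goods holds at most two goods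
   worth at most a, and a-EFX fails against an agent holding a heavy good together with another
   good.  The constraint 2-tau < 2a(a-r) forces tau > 2(1-a^2), so the error (r+tau)/(4+(2n-3)a)
   fits into 1-eta precisely because 1-eta > 2(1-a^2)/(4+(2n-3)a). *)

lemma bundle_val_mono:
  assumes "finite S" "T \<subseteq> S" "\<forall>t\<in>S. 0 \<le> w ! t"
  shows "bundle_val w T \<le> bundle_val w S"
  unfolding bundle_val_def using assms by (intro sum_mono2) auto

lemma bundle_val_le_card_mult:
  assumes "\<forall>t\<in>S. w ! t \<le> c"
  shows "bundle_val w S \<le> real (card S) * c"
  unfolding bundle_val_def using assms by (intro sum_bounded_above) auto

lemma bar_val_ge_card_mult:
  assumes "finite S" "g \<in> S" "L \<subseteq> S - {g}"
    and "\<forall>t\<in>S. 0 \<le> w ! t" "\<forall>t\<in>L. c \<le> w ! t"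
  shows "real (card L) * c \<le> bar_val w S"
proof -
  have "real (card L) * c \<le> bundle_val w L"
    unfolding bundle_val_def using assms(5) by (intro sum_bounded_below) auto
  also have "\<dots> \<le> bundle_val w (S - {g})"
    using assms by (intro bundle_val_mono) auto
  also have "\<dots> \<le> bar_val w S"
    unfolding bar_val_def using assms(1,2) by (auto intro!: Max_ge)
  finally show ?thesis .
qed

definition owned_goods :: "(nat \<Rightarrow> nat) \<Rightarrow> nat \<Rightarrow> nat \<Rightarrow> nat set" where
  "owned_goods own N j = {t. t < N \<and> own t = j}"

definition idle_agents :: "(nat \<Rightarrow> nat) \<Rightarrow> nat \<Rightarrow> nat \<Rightarrow> nat set" where
  "idle_agents own n k = {j. j < n \<and> owned_goods own k j = {}}"

lemma finite_owned_goods [simp]: "finite (owned_goods own N j)"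
  unfolding owned_goods_def by simp

lemma idle_agents_subset: "idle_agents own n k \<subseteq> {..<n}"
  unfolding idle_agents_def by auto

lemma finite_idle_agents [simp]: "finite (idle_agents own n k)"
  by (rule finite_subset[OF idle_agents_subset]) simp

lemma online_alloc_eq_owned_goods:
  "online_alloc alg p v = owned_goods (\<lambda>t. alg p (take (Suc t) v)) (length v)"
  unfolding online_alloc_def owned_goods_def by simp

lemma sum_card_owned_goods:
  assumes "\<forall>t<k. own t < n"
  shows "(\<Sum>j<n. card (owned_goods own k j)) = k"
  using sum_fun_comp[of "{..<k}" "{..<n}" own "\<lambda>_. 1::nat"] assms
  by (auto simp: owned_goods_def image_subset_iff)

lemma exists_agent_owning_three:
  assumes own: "\<forall>t<k. own t < n"
    and idle: "2 \<le> card (idle_agents own n k)"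
    and "2 * n < k + 4"
  shows "\<exists>j<n. 3 \<le> card (owned_goods own k j)"
proof (rule ccontr)
  define I where "I = idle_agents own n k"
  define c where "c = (\<lambda>j. card (owned_goods own k j))"
  assume "\<not> ?thesis"
  then have le2: "\<forall>j<n. c j \<le> 2" unfolding c_def by auto
  have I: "I \<subseteq> {..<n}" unfolding I_def by (rule idle_agents_subset)
  have "(\<Sum>j\<in>I. c j) = 0" unfolding I_def idle_agents_def c_def by simp
  moreover have "k = (\<Sum>j\<in>{..<n} - I. c j) + (\<Sum>j\<in>I. c j)"
    using sum_card_owned_goods[OF own] sum.subset_diff[OF I, of c] unfolding c_def by simp
  moreover have "(\<Sum>j\<in>{..<n} - I. c j) \<le> card ({..<n} - I) * 2"
    using le2 sum_bounded_above[of "{..<n} - I" c 2] by auto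
  moreover have "card ({..<n} - I) = n - card I" "card I \<le> n"
    using I by (simp_all add: card_Diff_subset finite_subset card_mono[of "{..<n}", simplified])
  moreover have "2 \<le> card I" using idle unfolding I_def .
  ultimately show False using assms(3) by linarith
qed

lemma exists_agent_owning_at_most_two_outside:
  assumes own: "\<forall>t<k. own t < n"
    and idle: "card (idle_agents own n k) \<le> 1"
    and J: "J \<subseteq> {..<n}" "card J \<le> 2"
    and "k + 6 \<le> 3 * n"
  shows "\<exists>i<n. i \<notin> J \<and> card (owned_goods own k i) \<le> 2"
proof (rule ccontr)
  define I where "I = idle_agents own n k"
  define c where "c = (\<lambda>j. card (owned_goods own k j))"
  assume "\<not> ?thesis"
  then have ge3: "\<forall>j\<in>{..<n} - J. 3 \<le> c j" unfolding c_def by auto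
  have finJ: "finite J" using J finite_subset by blast
  have "card J - 1 \<le> card (J - I)"
    using diff_card_le_card_Diff[of I J] idle unfolding I_def by simp
  also have "card (J - I) \<le> (\<Sum>j\<in>J - I. c j)"
  proof -
    have "\<forall>j\<in>J - I. 1 \<le> c j"
      using J(1) unfolding I_def idle_agents_def c_def by (auto simp: Suc_le_eq card_gt_0_iff)
    then show ?thesis using sum_bounded_below[of "J - I" 1 c] by simp
  qed
  also have "\<dots> \<le> (\<Sum>j\<in>J. c j)" using finJ by (intro sum_mono2) auto
  finally have "card J - 1 \<le> (\<Sum>j\<in>J. c j)" .
  moreover have "card ({..<n} - J) * 3 \<le> (\<Sum>j\<in>{..<n} - J. c j)"
    using ge3 sum_bounded_below[of "{..<n} - J" 3 c] by (simp add: mult.commute)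
  moreover have "k = (\<Sum>j\<in>{..<n} - J. c j) + (\<Sum>j\<in>J. c j)"
    using sum_card_owned_goods[OF own] sum.subset_diff[OF J(1), of c] unfolding c_def by simp
  moreover have "card ({..<n} - J) = n - card J"
    using J by (simp add: card_Diff_subset finJ)
  ultimately show False using J(2) assms(5) by linarith
qed

lemma exists_partner_of_last_two_goods:
  assumes own: "\<forall>t<k+2. own t < n"
    and idle: "card (idle_agents own n k) \<le> 1"
  shows "\<exists>g h. h \<in> {k, k+1} \<and> g < k+2 \<and> g \<noteq> h \<and> own g = own h"
proof (cases "own k = own (k+1)")
  case True
  then show ?thesis by (intro exI[of _ k] exI[of _ "k+1"]) auto
next
  case False
  have "\<not> {own k, own (k+1)} \<subseteq> idle_agents own n k"
  proof
    assume "{own k, own (k+1)} \<subseteq> idle_agents own n k"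
    then have "card {own k, own (k+1)} \<le> card (idle_agents own n k)"
      by (rule card_mono[OF finite_idle_agents])
    then show False using idle False by simp
  qed
  then obtain h where h: "h \<in> {k, k+1}" "owned_goods own k (own h) \<noteq> {}"
    using own unfolding idle_agents_def by auto
  then obtain g where "g < k" "own g = own h" by (auto simp: owned_goods_def)
  then show ?thesis using h(1) by (intro exI[of _ g] exI[of _ h]) auto
qed

lemma not_aEFX_if_two_idle_agents:
  assumes own: "\<forall>t<k+2. own t < n"
    and idle: "2 \<le> card (idle_agents own n k)"
    and "2 * n < k + 4" and "0 \<le> a" "0 \<le> c"
    and nonneg: "\<forall>t<k+2. 0 \<le> w ! t" and large: "\<forall>t<k. c \<le> w ! t"
    and light: "w ! k < a * (2 * c)"
  shows "\<not> is_aEFX n a w (owned_goods own (k+2))"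
proof
  assume efx: "is_aEFX n a w (owned_goods own (k+2))"
  define A where "A = owned_goods own (k+2)"
  have "\<forall>t<k. own t < n" using own by simp
  then obtain j where j: "j < n" and three: "3 \<le> card (owned_goods own k j)"
    using exists_agent_owning_three idle assms(3) by blast
  then obtain g where g: "g \<in> owned_goods own k j"
    by (metis card.empty ex_in_conv not_numeral_le_zero)
  have "real (card (owned_goods own k j - {g})) * c \<le> bar_val w (A j)"
    using g nonneg large unfolding A_def
    by (intro bar_val_ge_card_mult[where g = g]) (auto simp: owned_goods_def)
  moreover have "2 \<le> card (owned_goods own k j - {g})" using three g by simp
  ultimately have bar_j: "2 * c \<le> bar_val w (A j)"
    using mult_right_mono[of 2 "real (card (owned_goods own k j - {g}))" c] \<open>0 \<le> c\<close> by simp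
  have "\<not> idle_agents own n k \<subseteq> {own (k+1)}"
  proof
    assume "idle_agents own n k \<subseteq> {own (k+1)}"
    then have "card (idle_agents own n k) \<le> card {own (k+1)}" by (rule card_mono[rotated]) simp
    then show False using idle by simp
  qed
  then obtain i where i: "i \<in> idle_agents own n k" "i \<noteq> own (k+1)" by blast
  have "A i \<subseteq> {k}"
    using i unfolding A_def idle_agents_def owned_goods_def by (auto simp: less_Suc_eq)
  then have "bundle_val w (A i) \<le> w ! k"
    using bundle_val_mono[of "{k}" "A i" w] nonneg by (simp add: bundle_val_def)
  moreover have "a * bar_val w (A j) \<le> bundle_val w (A i)"
    using efx i j unfolding is_aEFX_def A_def idle_agents_def by auto
  moreover have "a * (2 * c) \<le> a * bar_val w (A j)"
    using bar_j \<open>0 \<le> a\<close> by (rule mult_left_mono)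
  ultimately show False using light by linarith
qed

lemma not_aEFX_if_at_most_one_idle_agent:
  assumes own: "\<forall>t<k+2. own t < n"
    and idle: "card (idle_agents own n k) \<le> 1"
    and "k + 6 \<le> 3 * n" and "0 \<le> a" "0 \<le> c"
    and nonneg: "\<forall>t<k+2. 0 \<le> w ! t" and small: "\<forall>t<k. w ! t \<le> c"
    and heavy: "w ! k = b" "w ! (k+1) = b" "2 * c < a * b"
  shows "\<not> is_aEFX n a w (owned_goods own (k+2))"
proof
  assume efx: "is_aEFX n a w (owned_goods own (k+2))"
  define A where "A = owned_goods own (k+2)"
  have "\<exists>i<n. i \<notin> {own k, own (k+1)} \<and> card (owned_goods own k i) \<le> 2"
    by (rule exists_agent_owning_at_most_two_outside[OF _ idle _ _ assms(3)])
      (use own in \<open>auto simp: card_insert_if\<close>)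
  then obtain i where i: "i < n" "i \<notin> {own k, own (k+1)}"
    and two: "card (owned_goods own k i) \<le> 2" by blast
  have "A i = owned_goods own k i"
    using i unfolding A_def owned_goods_def by (auto simp: less_Suc_eq)
  then have "bundle_val w (A i) \<le> real (card (owned_goods own k i)) * c"
    using small by (auto intro: bundle_val_le_card_mult simp: owned_goods_def)
  also have "\<dots> \<le> 2 * c" using two \<open>0 \<le> c\<close> by (simp add: mult_right_mono)
  finally have bundle_i: "bundle_val w (A i) \<le> 2 * c" .
  obtain g h where gh: "h \<in> {k, k+1}" "g < k+2" "g \<noteq> h" "own g = own h"
    using exists_partner_of_last_two_goods[OF own idle] by blast
  have "real (card {h}) * b \<le> bar_val w (A (own h))"
    using gh nonneg heavy unfolding A_def
    by (intro bar_val_ge_card_mult[where g = g]) (auto simp: owned_goods_def)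
  then have "a * b \<le> a * bar_val w (A (own h))" using \<open>0 \<le> a\<close> by (simp add: mult_left_mono)
  moreover have "a * bar_val w (A (own h)) \<le> bundle_val w (A i)"
    using efx i own gh(1) unfolding is_aEFX_def A_def by auto
  ultimately show False using bundle_i heavy(3) by linarith
qed

lemma no_online_aEFX_on_indistinguishable_pair:
  fixes alg :: online_alg
  assumes bound: "\<forall>p vs. alg p vs < n"
    and len: "length v = k + 2" "length w = k + 2"
    and prefix: "\<forall>t<k. take (Suc t) v = take (Suc t) w"
    and "k + 6 \<le> 3 * n" "2 * n < k + 4" "0 \<le> a" "0 \<le> c" "0 \<le> d"
    and v: "\<forall>t<k+2. 0 \<le> v ! t" "\<forall>t<k. v ! t \<le> c" "v ! k = b" "v ! (k+1) = b" "2 * c < a * b"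
    and w: "\<forall>t<k+2. 0 \<le> w ! t" "\<forall>t<k. d \<le> w ! t" "w ! k < a * (2 * d)"
  shows "\<not> (is_aEFX n a v (online_alloc alg p v) \<and> is_aEFX n a w (online_alloc alg p w))"
proof
  define own_v where "own_v = (\<lambda>t. alg p (take (Suc t) v))"
  define own_w where "own_w = (\<lambda>t. alg p (take (Suc t) w))"
  assume "is_aEFX n a v (online_alloc alg p v) \<and> is_aEFX n a w (online_alloc alg p w)"
  then have efx: "is_aEFX n a v (owned_goods own_v (k+2))" "is_aEFX n a w (owned_goods own_w (k+2))"
    using len by (simp_all add: online_alloc_eq_owned_goods own_v_def own_w_def)
  have own: "\<forall>t<k+2. own_v t < n" "\<forall>t<k+2. own_w t < n"
    using bound unfolding own_v_def own_w_def by simp_all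
  have "idle_agents own_v n k = idle_agents own_w n k"
    using prefix unfolding idle_agents_def owned_goods_def own_v_def own_w_def by auto
  show False
  proof (cases "2 \<le> card (idle_agents own_w n k)")
    case True
    show False using not_aEFX_if_two_idle_agents[OF own(2) True assms(6,7,9) w] efx(2) ..
  next
    case False
    then have idle_v: "card (idle_agents own_v n k) \<le> 1"
      using \<open>idle_agents own_v n k = idle_agents own_w n k\<close> by simp
    show False using not_aEFX_if_at_most_one_idle_agent[OF own(1) idle_v assms(5,7,8) v] efx(1) ..
  qed
qed

definition normalize_list :: "real list \<Rightarrow> real list" where
  "normalize_list xs = map (\<lambda>x. x / sum_list xs) xs"

lemma length_normalize_list [simp]: "length (normalize_list xs) = length xs"
  unfolding normalize_list_def by simp

lemma nth_normalize_list: "t < length xs \<Longrightarrow> normalize_list xs ! t = xs ! t / sum_list xs"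
  unfolding normalize_list_def by simp

lemma take_normalize_list: "take t (normalize_list xs) = map (\<lambda>x. x / sum_list xs) (take t xs)"
  unfolding normalize_list_def by (simp add: take_map)

lemma normalized_valuation_nth_nonneg:
  "normalized_valuation v \<Longrightarrow> t < length v \<Longrightarrow> 0 \<le> v ! t"
  unfolding normalized_valuation_def by simp

lemma normalized_valuation_normalize_list:
  assumes "\<forall>x\<in>set xs. 0 \<le> x" "0 < sum_list xs"
  shows "normalized_valuation (normalize_list xs)"
proof -
  have "sum_list (normalize_list xs) = sum_list xs * inverse (sum_list xs)"
    using sum_list_mult_const[of "\<lambda>x. x" "inverse (sum_list xs)" xs]
    by (simp add: normalize_list_def divide_inverse)
  then show ?thesis
    using assms unfolding normalized_valuation_def normalize_list_def by auto
qed

lemma card_set_normalize_list_le: "card (set (normalize_list xs)) \<le> card (set xs)"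
  unfolding normalize_list_def by (simp add: card_image_le)

lemma pred_error_eq_sum_list_zip:
  assumes "length p = length v"
  shows "pred_error p v = (\<Sum>(x, y)\<leftarrow>zip p v. \<bar>x - y\<bar>) / 2"
proof -
  have "(\<Sum>t<length v. \<bar>entry p t - entry v t\<bar>) = (\<Sum>t<length v. \<bar>p ! t - v ! t\<bar>)"
    using assms by (intro sum.cong) (auto simp: entry_def)
  also have "\<dots> = (\<Sum>(x, y)\<leftarrow>zip p v. \<bar>x - y\<bar>)"
    using assms by (simp add: sum_list_sum_nth atLeast0LessThan)
  finally show ?thesis using assms unfolding pred_error_def by simp
qed

lemma pred_error_normalize_list:
  assumes "length xs = length ys" "sum_list xs = sum_list ys" "0 < sum_list xs"
  shows "pred_error (normalize_list xs) (normalize_list ys)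
           = (\<Sum>(x, y)\<leftarrow>zip xs ys. \<bar>x - y\<bar>) / (2 * sum_list xs)"
proof -
  define S where "S = sum_list xs"
  have "\<bar>x / S - y / S\<bar> = \<bar>x - y\<bar> * inverse S" for x y
    using assms(3) unfolding S_def
    by (simp add: divide_inverse abs_mult flip: left_diff_distrib)
  then have scale: "(\<lambda>(x, y). \<bar>x - y\<bar>) \<circ> (\<lambda>(x, y). (x / S, y / S)) = (\<lambda>(x, y). \<bar>x - y\<bar> * inverse S)"
    by (auto simp del: abs_divide)
  have zip: "zip (normalize_list xs) (normalize_list ys) = map (\<lambda>(x, y). (x / S, y / S)) (zip xs ys)"
    unfolding normalize_list_def zip_map_map S_def assms(2) ..
  have "pred_error (normalize_list xs) (normalize_list ys)
          = (\<Sum>(x, y)\<leftarrow>zip (normalize_list xs) (normalize_list ys). \<bar>x - y\<bar>) / 2"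
    using assms(1) by (intro pred_error_eq_sum_list_zip) simp
  also have "\<dots> = (\<Sum>(x, y)\<leftarrow>zip xs ys. \<bar>x - y\<bar> * inverse S) / 2"
    unfolding zip map_map scale ..
  also have "\<dots> = (\<Sum>(x, y)\<leftarrow>zip xs ys. \<bar>x - y\<bar>) * inverse S / 2"
    unfolding case_prod_beta sum_list_mult_const ..
  finally show ?thesis by (simp add: S_def field_simps)
qed

definition prediction_values :: "nat \<Rightarrow> real \<Rightarrow> real list" where
  "prediction_values k a = replicate k a @ [2, 2]"

definition perturbed_values :: "nat \<Rightarrow> real \<Rightarrow> real \<Rightarrow> real \<Rightarrow> real list" where
  "perturbed_values k a r s = replicate (k - 1) a @ [a - r, 2 - s, 2 + r + s]"

lemma length_prediction_values [simp]: "length (prediction_values k a) = k + 2"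
  unfolding prediction_values_def by simp

lemma length_perturbed_values [simp]: "1 \<le> k \<Longrightarrow> length (perturbed_values k a r s) = k + 2"
  unfolding perturbed_values_def by simp

lemma sum_list_prediction_values: "sum_list (prediction_values k a) = real k * a + 4"
  unfolding prediction_values_def by (simp add: sum_list_replicate)

lemma sum_list_perturbed_values:
  "1 \<le> k \<Longrightarrow> sum_list (perturbed_values k a r s) = real k * a + 4"
  unfolding perturbed_values_def by (simp add: sum_list_replicate algebra_simps)

lemma card_set_prediction_values: "card (set (prediction_values k a)) \<le> 2"
proof -
  have "set (prediction_values k a) \<subseteq> {a, 2}" unfolding prediction_values_def by auto
  then have "card (set (prediction_values k a)) \<le> card {a, 2 :: real}" by (intro card_mono) auto
  also have "\<dots> \<le> 2" by (simp add: card_insert_if)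
  finally show ?thesis .
qed

lemma sum_list_abs_diff_prediction_perturbed:
  assumes "1 \<le> k"
  shows "(\<Sum>(x, y)\<leftarrow>zip (prediction_values k a) (perturbed_values k a r s). \<bar>x - y\<bar>)
           = \<bar>r\<bar> + \<bar>s\<bar> + \<bar>r + s\<bar>"
proof -
  have "prediction_values k a = replicate (k - 1) a @ [a, 2, 2]"
    using assms unfolding prediction_values_def
    by (metis Suc_diff_le diff_Suc_1 replicate_Suc replicate_append_same append_Cons append_Nil append.assoc)
  then show ?thesis
    unfolding perturbed_values_def by (simp add: sum_list_replicate)
qed

lemma nth_perturbed_values:
  assumes "1 \<le> k"
  shows "t < k \<Longrightarrow> perturbed_values k a r s ! t = (if Suc t = k then a - r else a)"
    and "perturbed_values k a r s ! k = 2 - s"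
    and "perturbed_values k a r s ! Suc k = 2 + r + s"
  using assms unfolding perturbed_values_def
  by (auto simp: nth_append nth_Cons' Suc_diff_le)

lemma take_perturbed_values:
  assumes "t < k"
  shows "take (Suc t) (perturbed_values k a r s) = take (Suc t) (perturbed_values k a r s')"
  using assms unfolding perturbed_values_def
  by (cases "Suc t = k") simp_all

lemma two_value_prediction_values:
  "0 \<le> a \<Longrightarrow> two_value_prediction (normalize_list (prediction_values k a))"
  unfolding two_value_prediction_def
  using card_set_normalize_list_le[of "prediction_values k a"] card_set_prediction_values[of k a]
  by (auto intro!: normalized_valuation_normalize_list
      simp: prediction_values_def sum_list_replicate add_nonneg_pos)

lemma normalized_valuation_perturbed_values:
  assumes "1 \<le> k" "0 \<le> a" "r \<le> a" "s \<le> 2" "0 \<le> 2 + r + s"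
  shows "normalized_valuation (normalize_list (perturbed_values k a r s))"
proof (rule normalized_valuation_normalize_list)
  show "\<forall>x\<in>set (perturbed_values k a r s). 0 \<le> x"
    using assms by (auto simp: perturbed_values_def)
  show "0 < sum_list (perturbed_values k a r s)"
    using assms by (simp add: sum_list_perturbed_values add_nonneg_pos)
qed

lemma pred_error_perturbed_values:
  assumes "1 \<le> k" "0 \<le> a"
  shows "pred_error (normalize_list (prediction_values k a)) (normalize_list (perturbed_values k a r s))
           = (\<bar>r\<bar> + \<bar>s\<bar> + \<bar>r + s\<bar>) / (2 * (real k * a + 4))"
  using assms
  by (subst pred_error_normalize_list)
    (simp_all add: sum_list_prediction_values sum_list_perturbed_values
      sum_list_abs_diff_prediction_perturbed add_nonneg_pos)

lemma perturbed_instance_admissible: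
  assumes "1 \<le> k" "0 \<le> a" "r \<le> a" "s \<le> 2" "0 \<le> 2 + r + s"
    and "\<bar>r\<bar> + \<bar>s\<bar> + \<bar>r + s\<bar> \<le> \<epsilon> * (2 * (real k * a + 4))"
  defines "p \<equiv> normalize_list (prediction_values k a)"
    and "v \<equiv> normalize_list (perturbed_values k a r s)"
  shows "two_value_prediction p \<and> normalized_valuation v \<and> length p = k + 2 \<and> length v = k + 2
           \<and> pred_error p v \<le> \<epsilon>"
proof -
  have "0 < 2 * (real k * a + 4)" using assms(2) by (simp add: add_nonneg_pos)
  moreover have "pred_error p v = (\<bar>r\<bar> + \<bar>s\<bar> + \<bar>r + s\<bar>) / (2 * (real k * a + 4))"
    using assms(1,2) unfolding p_def v_def by (rule pred_error_perturbed_values)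
  ultimately have "pred_error p v \<le> \<epsilon>"
    using assms(6) pos_divide_le_eq by metis
  then show ?thesis
    using assms by (simp add: two_value_prediction_values normalized_valuation_perturbed_values)
qed

lemma no_online_aEFX_on_perturbed_pair:
  fixes alg :: online_alg
  assumes bound: "\<forall>p vs. alg p vs < n"
    and k: "1 \<le> k" "k + 6 \<le> 3 * n" "2 * n < k + 4"
    and a: "0 < a" "a \<le> 1" and r: "0 < r" "r \<le> a"
    and \<tau>: "0 \<le> \<tau>" "\<tau> \<le> 2" "2 - \<tau> < a * (2 * (a - r))"
  defines "p \<equiv> normalize_list (prediction_values k a)"
    and "v \<equiv> normalize_list (perturbed_values k a r (- r / 2))"
    and "w \<equiv> normalize_list (perturbed_values k a r \<tau>)"
  shows "\<not> (is_aEFX n a v (online_alloc alg p v) \<and> is_aEFX n a w (online_alloc alg p w))"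
proof -
  define S where "S = real k * a + 4"
  have S: "0 < S" using a unfolding S_def by (simp add: add_nonneg_pos)
  have sums: "sum_list (perturbed_values k a r s) = S" for s
    using k(1) by (simp add: sum_list_perturbed_values S_def)
  have nth: "t < k \<Longrightarrow> v ! t = (if Suc t = k then a - r else a) / S"
    "t < k \<Longrightarrow> w ! t = (if Suc t = k then a - r else a) / S"
    "v ! k = (2 + r / 2) / S" "v ! (k + 1) = (2 + r / 2) / S" "w ! k = (2 - \<tau>) / S" for t
    using k(1) by (simp_all add: v_def w_def nth_normalize_list nth_perturbed_values sums)
  have nonneg: "\<forall>t<k+2. 0 \<le> v ! t" "\<forall>t<k+2. 0 \<le> w ! t"
    using normalized_valuation_perturbed_values[of k a r] k(1) a r \<tau>
    by (auto intro!: normalized_valuation_nth_nonneg simp: v_def w_def)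
  show ?thesis
  proof (rule no_online_aEFX_on_indistinguishable_pair[OF bound _ _ _ k(2,3)])
    show "\<forall>t<k. take (Suc t) v = take (Suc t) w"
      unfolding v_def w_def take_normalize_list sums using take_perturbed_values by metis
    show "\<forall>t<k. v ! t \<le> a / S" "\<forall>t<k. (a - r) / S \<le> w ! t"
      using nth(1,2) r S by (auto simp: divide_right_mono)
    show "2 * (a / S) < a * ((2 + r / 2) / S)" "w ! k < a * (2 * ((a - r) / S))"
      using nth(5) a r \<tau> S by (simp_all add: field_simps)
  qed (use k(1) a r S nonneg nth(3,4) in \<open>simp_all add: v_def w_def\<close>)
qed

lemma exists_perturbation_parameters:
  fixes a M :: real
  assumes "0 < a" "a \<le> 1" "2 * (1 - a\<^sup>2) < M"
  obtains r \<tau> where "0 < r" "r \<le> a" "0 \<le> \<tau>" "\<tau> \<le> 2" "2 - \<tau> < a * (2 * (a - r))" "r + \<tau> \<le> M"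
proof -
  define D where "D = min (M - 2 * (1 - a\<^sup>2)) (min a (2 * a\<^sup>2))"
  have D: "0 < D" "D \<le> M - 2 * (1 - a\<^sup>2)" "D \<le> a" "D \<le> 2 * a\<^sup>2"
    using assms unfolding D_def by auto
  have "a\<^sup>2 \<le> 1" using assms by (simp add: power_le_one)
  moreover have "D * a \<le> D" using assms D by (simp add: mult_right_le_one_le)
  ultimately show thesis
    using D by (intro that[of "D / 12" "2 - 2 * a\<^sup>2 + D / 3"]) (auto simp: algebra_simps power2_eq_square)
qed

lemma no_online_aEFX_within_error:
  fixes alg :: online_alg
  assumes bound: "\<forall>p vs. alg p vs < n"
    and k: "1 \<le> k" "k + 6 \<le> 3 * n" "2 * n < k + 4"
    and a: "0 < a" "a \<le> 1"
    and \<epsilon>: "2 * (1 - a\<^sup>2) < \<epsilon> * (real k * a + 4)"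
  shows "\<exists>p v. two_value_prediction p \<and> normalized_valuation v \<and> length p = k + 2 \<and>
           length v = k + 2 \<and> pred_error p v \<le> \<epsilon> \<and> \<not> is_aEFX n a v (online_alloc alg p v)"
proof -
  obtain r \<tau> where r: "0 < r" "r \<le> a" and \<tau>: "0 \<le> \<tau>" "\<tau> \<le> 2" "2 - \<tau> < a * (2 * (a - r))"
    and err: "r + \<tau> \<le> \<epsilon> * (real k * a + 4)"
    using exists_perturbation_parameters[OF a \<epsilon>] by blast
  have budget: "2 * (r + \<tau>) \<le> \<epsilon> * (2 * (real k * a + 4))"
    using err by (simp add: algebra_simps)
  define p where "p = normalize_list (prediction_values k a)"
  define v where "v = normalize_list (perturbed_values k a r (- r / 2))"
  define w where "w = normalize_list (perturbed_values k a r \<tau>)"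
  have "two_value_prediction p \<and> normalized_valuation v \<and> length p = k + 2 \<and> length v = k + 2
          \<and> pred_error p v \<le> \<epsilon>"
    unfolding p_def v_def using k(1) a r budget \<tau>(1)
    by (intro perturbed_instance_admissible) simp_all
  moreover have "two_value_prediction p \<and> normalized_valuation w \<and> length p = k + 2 \<and> length w = k + 2
          \<and> pred_error p w \<le> \<epsilon>"
    unfolding p_def w_def using k(1) a r budget \<tau>
    by (intro perturbed_instance_admissible) simp_all
  moreover have "\<not> (is_aEFX n a v (online_alloc alg p v) \<and> is_aEFX n a w (online_alloc alg p w))"
    unfolding p_def v_def w_def by (rule no_online_aEFX_on_perturbed_pair[OF bound k a r \<tau>])
  ultimately show ?thesis by blast
qed

theorem theorem4p17:
  fixes n :: nat and a \<eta> :: real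
  assumes "n \<ge> 3" and "0 < a" and "a \<le> 1"
    and "\<eta> < 1 - 2 * (1 - a^2) / (4 + (2 * real n - 3) * a)"
  shows "\<not> (\<exists>alg :: online_alg.
           (\<forall>p vs. alg p vs < n) \<and>
           (\<forall>p v. two_value_prediction p \<and> normalized_valuation v \<and>
                  length p = 2 * n - 1 \<and> length v = 2 * n - 1 \<and>
                  pred_error p v \<le> 1 - \<eta> \<longrightarrow>
                  is_aEFX n a v (online_alloc alg p v)))"
proof -
  define k where "k = 2 * n - 3"
  have k: "1 \<le> k" "k + 6 \<le> 3 * n" "2 * n < k + 4" "2 * n - 1 = k + 2"
    using assms(1) unfolding k_def by auto
  have "4 + (2 * real n - 3) * a = real k * a + 4"
    using assms(1) unfolding k_def by (simp add: of_nat_diff)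
  then have "2 * (1 - a\<^sup>2) / (real k * a + 4) < 1 - \<eta>"
    using assms(4) by (simp only:)
  then have "2 * (1 - a\<^sup>2) < (1 - \<eta>) * (real k * a + 4)"
    using assms(2) by (simp add: pos_divide_less_eq add_nonneg_pos)
  then show ?thesis
    using no_online_aEFX_within_error[OF _ k(1-3) assms(2,3)] k(4) by metis
qed

end
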